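(* Let $k\ge2$ be an integer and $\mathcal{M}=\{k\}\subseteq\mathbb{N}_0$. Then: (1) $\mathcal{M}^1=\{x\in\mathbb{N}_0:\ x\bmod 2k\in\{k,k+1,\dots,2k-1\}\}$; (2) $\mathcal{M}^2=\{k,\dots,2k-1\}\cup\{2jk-1:\ j\ge2\}$; (3) $\mathcal{M}^3=\{k,\dots,2k-1\}\cup\{4k-1,\dots,5k-2\}\cup\{(2j+1)k-2:\ j\ge3\}$; (4) $\mathcal{M}^4=\mathcal{M}_k\cap\{0,1,\dots,10k-3\}$; (5) $\mathcal{M}^5=\mathcal{M}_k$, where $\mathcal{M}_k=\{ip_k+j:\ i\in\mathbb{N}_0,\ k\le j\le 2k-1\}$ with $p_k=3k-1$.
   Context: A one-heap game is a set $\mathcal{M}\subseteq\mathbb{N}_0$ of moves; from position $x\in\mathbb{N}_0$ one may move to $y\in\mathbb{N}_0$ iff $x-y\in\mathcal{M}$. Misère play: a player who cannot move wins. If $0\in\mathcal{M}$, $P(\mathcal{M})=\varnothing$. Otherwise: a position is an N-position if it has no option or some option is a P-position; otherwise it is a P-position; $P(\mathcal{M})$ denotes the set of P-positions. $\mathcal{M}^\star=P(\mathcal{M})$, $\mathcal{M}^0=\mathcal{M}$, $\mathcal{M}^i=(\mathcal{M}^{i-1})^\star$. *)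

theory Defs
  imports Main
begin

text \<open>Misere one-heap game with move set M.
  Options of x are the y with y \<le> x and x - y \<in> M; since 0 \<notin> M these satisfy y < x.\<close>

function isP :: "nat set \<Rightarrow> nat \<Rightarrow> bool" where
  "isP M x = (0 \<notin> M \<and> (\<exists>y<x. x - y \<in> M) \<and> (\<forall>y<x. x - y \<in> M \<longrightarrow> \<not> isP M y))"
  by auto
termination
  by (relation "measure snd") auto

definition Pset :: "nat set \<Rightarrow> nat set" where
  "Pset M = (if 0 \<in> M then {} else {x. isP M x})"

definition iterP :: "nat set \<Rightarrow> nat \<Rightarrow> nat set" where
  "iterP M i = (Pset ^^ i) M"

definition Mk :: "nat \<Rightarrow> nat set" where
  "Mk k = {i * (3 * k - 1) + j | i j. k \<le> j \<and> j \<le> 2 * k - 1}"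

end

theory Submission
  imports Defs
begin

text \<open>
  A set \<open>S\<close> is the set of P-positions for the move set \<open>M\<close> exactly when every element of \<open>S\<close>
  has an option, no move leads from \<open>S\<close> into \<open>S\<close>, and every position outside \<open>S\<close> that has an
  option can move into \<open>S\<close>.
  Finally, every move set between \<open>{k..2k-1}\<close> and \<open>Mk k\<close> has \<open>Mk k\<close> itself as its set of
  P-positions: elements of \<open>Mk k\<close> have residues in \<open>[k, 2k-1]\<close> modulo \<open>3k - 1\<close>, and the
  residue of a difference of two of them never lies in that interval.
\<close>

declare isP.simps [simp del]

section \<open>P-positions as an independent dominating set\<close>

lemma Pset_eqI:
  assumes "0 \<notin> M"
    and has_option: "\<And>x. x \<in> S \<Longrightarrow> \<exists>y<x. x - y \<in> M"
    and independent: "\<And>x y. x \<in> S \<Longrightarrow> y \<in> S \<Longrightarrow> y < x \<Longrightarrow> x - y \<notin> M"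
    and dominating: "\<And>x. x \<notin> S \<Longrightarrow> \<exists>y<x. x - y \<in> M \<Longrightarrow> \<exists>y\<in>S. y < x \<and> x - y \<in> M"
  shows "Pset M = S"
proof -
  have "isP M x \<longleftrightarrow> x \<in> S" for x
  proof (induction x rule: less_induct)
    case (less x)
    then show ?case
      using isP.simps[of M x] \<open>0 \<notin> M\<close> has_option independent dominating by metis
  qed
  then show ?thesis
    using \<open>0 \<notin> M\<close> by (auto simp: Pset_def)
qed

lemma Pset_eqI_least_move:
  assumes "0 < k" "k \<in> M" "M \<subseteq> {k..}" "S \<subseteq> {k..}"
    and independent: "\<And>x y. x \<in> S \<Longrightarrow> y \<in> S \<Longrightarrow> y < x \<Longrightarrow> x - y \<notin> M"
    and dominating: "\<And>x. k \<le> x \<Longrightarrow> x \<notin> S \<Longrightarrow> \<exists>y\<in>S. y < x \<and> x - y \<in> M"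
  shows "Pset M = S"
proof (rule Pset_eqI)
  show "0 \<notin> M"
    using assms(1,3) by auto
  show "\<exists>y<x. x - y \<in> M" if "x \<in> S" for x
    using assms(1,2,4) that by (intro exI[of _ "x - k"]) auto
  show "\<exists>y\<in>S. y < x \<and> x - y \<in> M" if "x \<notin> S" "\<exists>y<x. x - y \<in> M" for x
    using assms(3) that by (intro dominating) auto
qed (fact independent)

section \<open>Residues of differences\<close>

lemma int_mod_diff:
  fixes x m D :: nat
  assumes "m \<le> x"
  shows "int ((x - m) mod D) = (int (x mod D) - int (m mod D)) mod int D"
  using assms by (simp add: of_nat_mod of_nat_diff mod_diff_eq zmod_int)

lemma mod_diff_of_mod_le:
  fixes x m D :: nat
  assumes "m \<le> x" "m mod D \<le> x mod D"
  shows "(x - m) mod D = x mod D - m mod D"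
proof (cases "D = 0")
  case False
  then have "x mod D < D"
    by simp
  then have "(int (x mod D) - int (m mod D)) mod int D = int (x mod D) - int (m mod D)"
    using assms(2) by (intro mod_pos_pos_trivial) linarith+
  then show ?thesis
    using int_mod_diff[OF assms(1), of D] assms(2) by linarith
qed simp

lemma mod_diff_of_mod_less:
  fixes x m D :: nat
  assumes "m \<le> x" "x mod D < m mod D"
  shows "(x - m) mod D = D + x mod D - m mod D"
proof -
  have "D \<noteq> 0"
    using assms by (metis leD mod_by_0)
  have "(int (x mod D) - int (m mod D)) mod int D = (int D + int (x mod D) - int (m mod D)) mod int D"
    by (simp add: mod_add_self1 add_diff_eq[symmetric])
  also have "\<dots> = int D + int (x mod D) - int (m mod D)"
    using assms(2) mod_less_divisor[of D m] \<open>D \<noteq> 0\<close> by (intro mod_pos_pos_trivial) linarith+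
  finally show ?thesis
    using int_mod_diff[OF assms(1), of D] assms(2) by linarith
qed

lemma mod_diff_cases:
  fixes x m D :: nat
  assumes "m \<le> x"
  shows "m mod D \<le> x mod D \<and> (x - m) mod D = x mod D - m mod D \<or>
    x mod D < m mod D \<and> (x - m) mod D = D + x mod D - m mod D"
  using mod_diff_of_mod_le[OF assms] mod_diff_of_mod_less[OF assms] by (metis not_le)

lemma mod_eq_of_decomp:
  fixes x c D s :: nat
  shows "x = c * D + s \<Longrightarrow> s < D \<Longrightarrow> x mod D = s"
  by simp

lemma residue_class_gap:
  fixes x D c :: nat
  shows "x \<le> c * D + x mod D \<or> c * D + D + x mod D \<le> x"
proof -
  have "x = x div D * D + x mod D"
    by simp
  moreover have "x div D * D \<le> c * D \<or> c * D + D \<le> x div D * D"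
    using mult_le_mono1[of "Suc c" "x div D" D] by (cases "x div D \<le> c") auto
  ultimately show ?thesis
    by linarith
qed

lemma add_mod_le_of_mod_less:
  fixes x D :: nat
  shows "x mod D < x \<Longrightarrow> D + x mod D \<le> x"
  using residue_class_gap[of x 0 D] by simp

lemma residue_class_from:
  fixes r D c b :: nat
  assumes "r < D" "b = c * D + r"
  shows "{x. b \<le> x \<and> x mod D = r} = {j * D + r | j. c \<le> j}"
proof (intro set_eqI iffI)
  fix x
  assume "x \<in> {x. b \<le> x \<and> x mod D = r}"
  then have x: "x = x div D * D + r" "c * D + r \<le> x"
    using assms(2) div_mult_mod_eq[of x D] by auto
  then have "c * D \<le> x div D * D"
    by linarith
  then have "c \<le> x div D"
    using assms(1) by simp
  then show "x \<in> {j * D + r | j. c \<le> j}"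
    using x by blast
next
  fix x
  assume "x \<in> {j * D + r | j. c \<le> j}"
  then show "x \<in> {x. b \<le> x \<and> x mod D = r}"
    using assms by auto
qed

lemma small_move_into_interval:
  fixes a b k x :: nat
  assumes "{a..b} \<subseteq> S" "{k..2 * k - 1} \<subseteq> M" "0 < k" "a \<le> b" "a + k \<le> x" "x \<le> b + (2 * k - 1)"
  shows "\<exists>y\<in>S. y < x \<and> x - y \<in> M"
proof -
  define y where "y = min b (x - k)"
  have "y \<in> {a..b}" "x - y \<in> {k..2 * k - 1}"
    using assms(3-6) unfolding y_def min_def by auto
  then show ?thesis
    using assms(1-3) by (intro bexI[of _ y]) auto
qed

section \<open>The periodic set \<open>Mk k\<close>\<close>

lemma Mk_intro:
  assumes "i * (3 * k - 1) \<le> x" "k \<le> x - i * (3 * k - 1)" "x - i * (3 * k - 1) \<le> 2 * k - 1"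
  shows "x \<in> Mk k"
  unfolding Mk_def using assms by (intro CollectI exI[of _ i] exI[of _ "x - i * (3 * k - 1)"]) auto

lemma mem_Mk_iff:
  assumes "0 < k"
  shows "x \<in> Mk k \<longleftrightarrow> x mod (3 * k - 1) \<in> {k..2 * k - 1}"
proof
  assume "x \<in> Mk k"
  then obtain i j where "x = i * (3 * k - 1) + j" "k \<le> j" "j \<le> 2 * k - 1"
    unfolding Mk_def by blast
  moreover have "j < 3 * k - 1"
    using assms \<open>j \<le> 2 * k - 1\<close> by linarith
  ultimately have "x mod (3 * k - 1) = j"
    by (intro mod_eq_of_decomp[of _ i])
  then show "x mod (3 * k - 1) \<in> {k..2 * k - 1}"
    using \<open>k \<le> j\<close> \<open>j \<le> 2 * k - 1\<close> by simp
next
  assume "x mod (3 * k - 1) \<in> {k..2 * k - 1}"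
  then show "x \<in> Mk k"
    by (intro Mk_intro[of "x div (3 * k - 1)"]) (auto simp: minus_div_mult_eq_mod)
qed

lemma Mk_ge: "x \<in> Mk k \<Longrightarrow> k \<le> x"
  unfolding Mk_def by auto

lemma Mk_independent:
  assumes "0 < k" "x \<in> Mk k" "y \<in> Mk k" "y < x"
  shows "x - y \<notin> Mk k"
proof
  assume "x - y \<in> Mk k"
  then have "k \<le> (x - y) mod (3 * k - 1)" "(x - y) mod (3 * k - 1) \<le> 2 * k - 1"
    "k \<le> x mod (3 * k - 1)" "x mod (3 * k - 1) \<le> 2 * k - 1"
    "k \<le> y mod (3 * k - 1)" "y mod (3 * k - 1) \<le> 2 * k - 1"
    using assms(1-3) mem_Mk_iff by auto
  then show False
    using mod_diff_cases[OF less_imp_le[OF assms(4)], of "3 * k - 1"] assms(1) by linarith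
qed

lemma Mk_dominating:
  assumes "0 < k" "k \<le> x" "x \<notin> Mk k"
  shows "\<exists>m\<in>{k..2 * k - 1}. m \<le> x \<and> x - m \<in> Mk k"
proof -
  define r where "r = x mod (3 * k - 1)"
  have "r < 3 * k - 1"
    using assms(1) r_def by simp
  have "r < k \<or> 2 * k \<le> r"
    using assms r_def by (auto simp: mem_Mk_iff)
  then show ?thesis
  proof
    assume "r < k"
    then have "r < x"
      using assms(2) by linarith
    then have "3 * k - 1 + r \<le> x"
      using add_mod_le_of_mod_less[of x "3 * k - 1"] r_def by simp
    moreover have "(x - (k + r)) mod (3 * k - 1) = 2 * k - 1"
      using mod_diff_of_mod_less[of "k + r" x "3 * k - 1"] \<open>r < k\<close> calculation r_def assms(1) by simp
    ultimately show ?thesis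
      using \<open>r < k\<close> assms(1) by (intro bexI[of _ "k + r"]) (auto simp: mem_Mk_iff)
  next
    assume "2 * k \<le> r"
    have "r - k < 3 * k - 1"
      using \<open>r < 3 * k - 1\<close> by linarith
    then have small: "(r - k) mod (3 * k - 1) = r - k"
      by simp
    have "r - k \<le> x"
      using r_def mod_less_eq_dividend[of x "3 * k - 1"] by linarith
    then have "(x - (r - k)) mod (3 * k - 1) = r - (r - k)"
      using mod_diff_of_mod_le[of "r - k" x "3 * k - 1"] small r_def by simp
    then show ?thesis
      using \<open>2 * k \<le> r\<close> \<open>r < 3 * k - 1\<close> \<open>r - k \<le> x\<close> assms(1)
      by (intro bexI[of _ "r - k"]) (auto simp: mem_Mk_iff)
  qed
qed

lemma Pset_eq_Mk:
  assumes "0 < k" "{k..2 * k - 1} \<subseteq> M" "M \<subseteq> Mk k"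
  shows "Pset M = Mk k"
proof (rule Pset_eqI_least_move[OF assms(1)])
  show "k \<in> M" "M \<subseteq> {k..}" "Mk k \<subseteq> {k..}"
    using assms Mk_ge by fastforce+
  show "x - y \<notin> M" if "x \<in> Mk k" "y \<in> Mk k" "y < x" for x y
    using Mk_independent[OF assms(1) that] assms(3) by blast
  show "\<exists>y\<in>Mk k. y < x \<and> x - y \<in> M" if x: "k \<le> x" "x \<notin> Mk k" for x
  proof -
    obtain m where "m \<in> {k..2 * k - 1}" "m \<le> x" "x - m \<in> Mk k"
      using Mk_dominating[OF assms(1) x] by blast
    then show ?thesis
      using assms(1,2) by (intro bexI[of _ "x - m"]) auto
  qed
qed

section \<open>The iterates of \<open>{k}\<close>\<close>

definition P1 :: "nat \<Rightarrow> nat set" where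
  "P1 k = {x. k \<le> x mod (2 * k)}"

definition P2 :: "nat \<Rightarrow> nat set" where
  "P2 k = {k..2 * k - 1} \<union> {x. 4 * k - 1 \<le> x \<and> x mod (2 * k) = 2 * k - 1}"

definition P3 :: "nat \<Rightarrow> nat set" where
  "P3 k = {k..2 * k - 1} \<union> {4 * k - 1..5 * k - 2} \<union> {x. 7 * k - 2 \<le> x \<and> x mod (2 * k) = k - 2}"

definition P4 :: "nat \<Rightarrow> nat set" where
  "P4 k = {k..2 * k - 1} \<union> {4 * k - 1..5 * k - 2} \<union> {7 * k - 2..8 * k - 3} \<union> {10 * k - 3}"

lemma P1_ge: "x \<in> P1 k \<Longrightarrow> k \<le> x"
  unfolding P1_def using mod_less_eq_dividend[of x "2 * k"] by (simp only: mem_Collect_eq)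

lemma Pset_singleton:
  assumes "0 < k"
  shows "Pset {k} = P1 k"
proof (rule Pset_eqI_least_move[of k])
  have D: "\<And>z. z mod (2 * k) < 2 * k"
    using assms by simp
  show "P1 k \<subseteq> {k..}"
    using P1_ge by blast
  show "x - y \<notin> {k}" if "x \<in> P1 k" "y \<in> P1 k" "y < x" for x y
  proof
    assume "x - y \<in> {k}"
    then have "(x - y) mod (2 * k) = k"
      using assms by simp
    moreover have "k \<le> x mod (2 * k)" "k \<le> y mod (2 * k)"
      using that by (simp_all add: P1_def)
    ultimately show False
      using mod_diff_cases[of y x "2 * k"] D[of x] D[of y] \<open>y < x\<close> by linarith
  qed
  show "\<exists>y\<in>P1 k. y < x \<and> x - y \<in> {k}" if "k \<le> x" "x \<notin> P1 k" for x
  proof (intro bexI conjI)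
    show "x - (x - k) \<in> {k}" "x - k < x"
      using that assms by auto
    have "x mod (2 * k) < k" "k mod (2 * k) = k"
      using that assms by (simp_all add: P1_def)
    then show "x - k \<in> P1 k"
      using mod_diff_of_mod_less[of k x "2 * k"] \<open>k \<le> x\<close> by (simp add: P1_def)
  qed
qed (use assms in auto)

lemma P2_subset_P1: "P2 k \<subseteq> P1 k"
proof
  fix x
  assume "x \<in> P2 k"
  then show "x \<in> P1 k"
    unfolding P1_def P2_def by (cases "x < 2 * k") auto
qed

lemma P2_dominating:
  assumes "0 < k" "k \<le> x" "x \<notin> P2 k"
  shows "\<exists>y\<in>P2 k. y < x \<and> x - y \<in> P1 k"
proof -
  define r where "r = x mod (2 * k)"
  have "r < 2 * k"
    using assms(1) r_def by simp
  have "x \<notin> {k..2 * k - 1}"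
    using assms(3) by (simp add: P2_def)
  then have x: "2 * k + r \<le> x"
    using residue_class_gap[of x 0 "2 * k"] assms(2) \<open>r < 2 * k\<close> r_def by auto
  have "r \<noteq> 2 * k - 1"
    using assms(3) x r_def by (auto simp: P2_def)
  then consider "r < k" | "k \<le> r" "r < 2 * k - 1"
    using \<open>r < 2 * k\<close> by linarith
  then show ?thesis
  proof cases
    case 1
    have "(x - (k + r)) mod (2 * k) = k"
      using mod_diff_of_mod_less[of "k + r" x "2 * k"] 1 x r_def by simp
    then show ?thesis
      using 1 x by (intro bexI[of _ "k + r"]) (auto simp: P1_def P2_def)
  next
    case 2
    have "(x - (2 * k - 1)) mod (2 * k) = r + 1"
      using mod_diff_of_mod_less[of "2 * k - 1" x "2 * k"] 2 x r_def by simp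
    then show ?thesis
      using 2 x by (intro bexI[of _ "2 * k - 1"]) (auto simp: P1_def P2_def)
  qed
qed

lemma Pset_P1:
  assumes "0 < k"
  shows "Pset (P1 k) = P2 k"
proof (rule Pset_eqI_least_move[OF assms])
  have D: "\<And>z. z mod (2 * k) < 2 * k"
    using assms by simp
  show "k \<in> P1 k"
    using assms by (simp add: P1_def)
  show "P1 k \<subseteq> {k..}" "P2 k \<subseteq> {k..}"
    using P1_ge P2_subset_P1 by blast+
  show "x - y \<notin> P1 k" if "x \<in> P2 k" "y \<in> P2 k" "y < x" for x y
  proof -
    have "y mod (2 * k) \<le> x mod (2 * k)"
      using that D[of x] D[of y] by (auto simp: P2_def)
    moreover have "k \<le> y mod (2 * k)"
      using that P2_subset_P1 by (auto simp: P1_def)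
    ultimately show ?thesis
      using mod_diff_of_mod_le[of y x "2 * k"] that D[of x] by (auto simp: P1_def)
  qed
qed (use assms P2_dominating in blast)

lemma P3_independent:
  assumes "2 \<le> k" "x \<in> P3 k" "y \<in> P3 k" "y < x"
  shows "x - y \<notin> P2 k"
proof
  assume move: "x - y \<in> P2 k"
  have D: "\<And>z. z mod (2 * k) < 2 * k"
    using assms(1) by simp
  show False
  proof (cases "x \<le> 5 * k - 2")
    case True
    then show False
      using assms move unfolding P2_def P3_def by auto
  next
    case False
    then have x: "7 * k - 2 \<le> x" "x mod (2 * k) = k - 2"
      using assms(2) by (auto simp: P3_def)
    show False
    proof (cases "y \<le> 5 * k - 2")
      case True
      then have "(x - y) mod (2 * k) = 2 * k - 1"
        using move x by (auto simp: P2_def)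
      then have "(x - (x - y)) mod (2 * k) = k - 1"
        using mod_diff_of_mod_less[of "x - y" x "2 * k"] x assms(1) by simp
      then have "y mod (2 * k) = k - 1"
        using \<open>y < x\<close> by simp
      then show False
        using True assms(1,3) residue_class_gap[of y 0 "2 * k"] residue_class_gap[of y 1 "2 * k"]
        by (auto simp: P3_def)
    next
      case False
      then have "y mod (2 * k) = k - 2"
        using assms(3) by (auto simp: P3_def)
      then have "(x - y) mod (2 * k) = 0"
        using mod_diff_of_mod_le[of y x "2 * k"] x \<open>y < x\<close> by simp
      moreover have "k \<le> (x - y) mod (2 * k)"
        using move P2_subset_P1 unfolding P1_def by blast
      ultimately show False
        using assms(1) by linarith
    qed
  qed
qed

lemma small_shift_into_P3:
  assumes "2 \<le> k" "7 * k - 2 \<le> x" "x mod (2 * k) + 3 \<le> k \<or> 2 * k - 2 \<le> x mod (2 * k)"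
  shows "\<exists>m\<in>{k..2 * k - 1}. m < x \<and> x - m \<in> P3 k"
proof -
  define r where "r = x mod (2 * k)"
  have "r < 2 * k"
    using assms(1) r_def by simp
  obtain m where m: "m \<in> {k..2 * k - 1}" "(x - m) mod (2 * k) = k - 2"
  proof (cases "r + 3 \<le> k")
    case True
    then have "(x - (k + 2 + r)) mod (2 * k) = k - 2"
      using mod_diff_of_mod_less[of "k + 2 + r" x "2 * k"] assms(2) r_def by simp
    then show thesis
      using True by (intro that[of "k + 2 + r"]) auto
  next
    case False
    have "r + 2 - k < 2 * k"
      using \<open>r < 2 * k\<close> assms(1) by linarith
    then have small: "(r + 2 - k) mod (2 * k) = r + 2 - k"
      by simp
    have "r + 2 - k \<le> x"
      using assms(1) r_def mod_less_eq_dividend[of x "2 * k"] by linarith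
    then have "(x - (r + 2 - k)) mod (2 * k) = r - (r + 2 - k)"
      using mod_diff_of_mod_le[of "r + 2 - k" x "2 * k"] small assms(1) r_def by simp
    then have "(x - (r + 2 - k)) mod (2 * k) = k - 2"
      using False by simp
    then show thesis
      using False assms(1) assms(3)[folded r_def] \<open>r < 2 * k\<close> by (intro that[of "r + 2 - k"]) auto
  qed
  have "5 * k - 1 \<le> x - m"
    using m(1) assms(1,2) by auto
  then have "7 * k - 2 \<le> x - m"
    using residue_class_gap[of "x - m" 2 "2 * k"] m(2) assms(1) by linarith
  then show ?thesis
    using m assms(1,2) by (intro bexI[of _ m]) (auto simp: P3_def)
qed

lemma P3_dominating_small:
  assumes "2 \<le> k" "k \<le> x" "x \<le> 7 * k - 3" "x \<notin> P3 k"
  shows "\<exists>y\<in>P3 k. y < x \<and> x - y \<in> P2 k"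
proof -
  have I1: "{k..2 * k - 1} \<subseteq> P3 k" and I2: "{4 * k - 1..5 * k - 2} \<subseteq> P3 k"
    and moves: "{k..2 * k - 1} \<subseteq> P2 k"
    by (auto simp: P2_def P3_def)
  have "x \<notin> {k..2 * k - 1}" "x \<notin> {4 * k - 1..5 * k - 2}"
    using assms(4) by (auto simp: P3_def)
  then consider "2 * k \<le> x" "x \<le> 4 * k - 2" | "5 * k - 1 \<le> x" "x \<le> 7 * k - 3"
    using assms(2,3) by fastforce
  then show ?thesis
  proof cases
    case 1
    then show ?thesis
      using assms(1) small_move_into_interval[OF I1 moves] by simp
  next
    case 2
    then show ?thesis
      using assms(1) small_move_into_interval[OF I2 moves] by simp
  qed
qed

lemma P3_dominating_large:
  assumes "2 \<le> k" "7 * k - 2 \<le> x" "x \<notin> P3 k"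
  shows "\<exists>y\<in>P3 k. y < x \<and> x - y \<in> P2 k"
proof -
  define r where "r = x mod (2 * k)"
  have "r \<noteq> k - 2" "r < 2 * k"
    using assms r_def by (auto simp: P3_def)
  then consider "r + 3 \<le> k \<or> 2 * k - 2 \<le> r" | "k - 1 \<le> r" "r \<le> 2 * k - 3"
    by linarith
  then show ?thesis
  proof cases
    case 1
    then obtain m where "m \<in> {k..2 * k - 1}" "m < x" "x - m \<in> P3 k"
      using small_shift_into_P3[OF assms(1,2)] r_def by blast
    then show ?thesis
      using assms(1) by (intro bexI[of _ "x - m"]) (auto simp: P2_def)
  next
    case 2
    have "(x - (r + 1)) mod (2 * k) = 2 * k - 1"
      using mod_diff_of_mod_less[of "r + 1" x "2 * k"] 2 assms(1,2) r_def by simp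
    moreover have "4 * k - 1 \<le> x - (r + 1)" "k \<le> r + 1" "r + 1 \<le> 2 * k - 1" "r + 1 < x"
      using 2 assms(1,2) by linarith+
    ultimately show ?thesis
      by (intro bexI[of _ "r + 1"]) (auto simp: P2_def P3_def)
  qed
qed

lemma P3_dominating:
  assumes "2 \<le> k" "k \<le> x" "x \<notin> P3 k"
  shows "\<exists>y\<in>P3 k. y < x \<and> x - y \<in> P2 k"
  using P3_dominating_small[OF assms(1,2) _ assms(3)] P3_dominating_large[OF assms(1) _ assms(3)]
  by (cases "x \<le> 7 * k - 3") auto

lemma Pset_P2:
  assumes "2 \<le> k"
  shows "Pset (P2 k) = P3 k"
proof (rule Pset_eqI_least_move[of k])
  show "P2 k \<subseteq> {k..}"
    using P1_ge P2_subset_P1 by blast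
  show "k \<in> P2 k" "P3 k \<subseteq> {k..}"
    using assms by (auto simp: P2_def P3_def)
qed (use assms P3_independent P3_dominating in auto)

lemma P4_eq:
  assumes "2 \<le> k"
  shows "P4 k = Mk k \<inter> {0..10 * k - 3}"
proof (intro set_eqI iffI)
  fix x
  assume x: "x \<in> P4 k"
  have "x \<le> 10 * k - 3"
    using x assms by (auto simp: P4_def)
  moreover have "x \<in> Mk k"
    using x unfolding P4_def
  proof (elim UnE)
    assume "x \<in> {k..2 * k - 1}"
    then show ?thesis
      by (intro Mk_intro[of 0]) auto
  next
    assume "x \<in> {4 * k - 1..5 * k - 2}"
    then show ?thesis
      using assms by (intro Mk_intro[of 1]) auto
  next
    assume "x \<in> {7 * k - 2..8 * k - 3}"
    then show ?thesis
      using assms by (intro Mk_intro[of 2]) auto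
  next
    assume "x \<in> {10 * k - 3}"
    then show ?thesis
      using assms by (intro Mk_intro[of 3]) auto
  qed
  ultimately show "x \<in> Mk k \<inter> {0..10 * k - 3}"
    by simp
next
  fix x
  assume "x \<in> Mk k \<inter> {0..10 * k - 3}"
  then obtain i j where x: "x = i * (3 * k - 1) + j" "k \<le> j" "j \<le> 2 * k - 1" "x \<le> 10 * k - 3"
    unfolding Mk_def by auto
  have "4 * (3 * k - 1) \<le> i * (3 * k - 1)" if "4 \<le> i"
    using that by (rule mult_le_mono1)
  then have "i = 0 \<or> i = 1 \<or> i = 2 \<or> i = 3"
    using x assms by linarith
  then show "x \<in> P4 k"
    using x assms unfolding P4_def by (elim disjE) (simp; linarith)+
qed

lemma P4_of_P3_le:
  assumes "2 \<le> k" "z \<in> P3 k" "z \<le> 9 * k - 3"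
  shows "z \<in> P4 k"
proof (cases "z \<le> 5 * k - 2")
  case False
  then have "7 * k - 2 \<le> z" "z mod (2 * k) = k - 2"
    using assms(2) by (auto simp: P3_def)
  then have "z = 7 * k - 2"
    using residue_class_gap[of z 3 "2 * k"] assms(1,3) by linarith
  moreover have "7 * k - 2 \<le> 8 * k - 3"
    using assms(1) by linarith
  ultimately show ?thesis
    by (simp add: P4_def)
qed (use assms in \<open>auto simp: P3_def P4_def\<close>)

lemma P4_independent:
  assumes "2 \<le> k" "x \<in> P4 k" "y \<in> P4 k" "y < x"
  shows "x - y \<notin> P3 k"
proof
  assume "x - y \<in> P3 k"
  moreover have "x - y \<le> 9 * k - 3"
    using assms by (auto simp: P4_def)
  ultimately have "x - y \<in> Mk k"
    using P4_of_P3_le P4_eq assms(1) by blast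
  moreover have "x \<in> Mk k" "y \<in> Mk k"
    using assms P4_eq by blast+
  ultimately show False
    using Mk_independent assms(1,4) by simp
qed

lemma P4_dominating_small:
  assumes "2 \<le> k" "k \<le> x" "x \<le> 10 * k - 3" "x \<notin> P4 k"
  shows "\<exists>y\<in>P4 k. y < x \<and> x - y \<in> P3 k"
proof -
  have I1: "{k..2 * k - 1} \<subseteq> P4 k" and I2: "{4 * k - 1..5 * k - 2} \<subseteq> P4 k"
    and I3: "{7 * k - 2..8 * k - 3} \<subseteq> P4 k" and moves: "{k..2 * k - 1} \<subseteq> P3 k"
    by (auto simp: P3_def P4_def)
  have "x \<notin> {k..2 * k - 1}" "x \<notin> {4 * k - 1..5 * k - 2}" "x \<notin> {7 * k - 2..8 * k - 3}" "x \<noteq> 10 * k - 3"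
    using assms(4) by (auto simp: P4_def)
  then consider "2 * k \<le> x" "x \<le> 4 * k - 2" | "5 * k - 1 \<le> x" "x \<le> 7 * k - 3" | "8 * k - 2 \<le> x" "x \<le> 10 * k - 4"
    using assms(2,3) by fastforce
  then show ?thesis
  proof cases
    case 1
    then show ?thesis
      using assms(1) small_move_into_interval[OF I1 moves] by simp
  next
    case 2
    then show ?thesis
      using assms(1) small_move_into_interval[OF I2 moves] by simp
  next
    case 3
    then show ?thesis
      using assms(1) small_move_into_interval[OF I3 moves] by simp
  qed
qed

lemma P4_dominating_large:
  assumes "2 \<le> k" "10 * k - 3 < x"
  shows "\<exists>y\<in>P4 k. y < x \<and> x - y \<in> P3 k"
proof -
  define r where "r = x mod (2 * k)"
  have "r < 2 * k"
    using assms(1) r_def by simp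
  then consider "r + 3 \<le> k \<or> 2 * k - 2 \<le> r" | "k \<le> r + 2" "r + 4 \<le> 2 * k" | "r = 2 * k - 3"
    by linarith
  then show ?thesis
  proof cases
    case 1
    have "7 * k - 2 \<le> x"
      using assms(2) by linarith
    then obtain m where "m \<in> {k..2 * k - 1}" "m < x" "x - m \<in> P3 k"
      using small_shift_into_P3[OF assms(1)] 1 r_def by blast
    then show ?thesis
      by (intro bexI[of _ m]) (auto simp: P4_def)
  next
    case 2
    define y where "y = r + 3 * k + 2"
    have "y mod (2 * k) = r + 2 - k"
      using 2 unfolding y_def by (intro mod_eq_of_decomp[of _ 2]) linarith+
    then have "(x - y) mod (2 * k) = k - 2"
      using mod_diff_of_mod_le[of y x "2 * k"] 2 assms(2) r_def y_def by simp
    moreover have "5 * k \<le> x - y"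
      using 2 assms(2) y_def by linarith
    ultimately have "x - y \<in> P3 k"
      using residue_class_gap[of "x - y" 2 "2 * k"] assms(1) unfolding P3_def by auto
    moreover have "4 * k - 1 \<le> y" "y \<le> 5 * k - 2" "y < x"
      using 2 assms(2) unfolding y_def by linarith+
    ultimately show ?thesis
      by (intro bexI[of _ y]) (auto simp: P4_def)
  next
    case 3
    define z where "z = x - (7 * k - 1)"
    have "(7 * k - 1) mod (2 * k) = k - 1"
      using assms(1) by (intro mod_eq_of_decomp[of _ 3]) linarith+
    then have "z mod (2 * k) = k - 2"
      using mod_diff_of_mod_le[of "7 * k - 1" x "2 * k"] 3 assms r_def z_def by simp
    moreover have "3 * k - 1 \<le> z"
      using assms(2) z_def by linarith
    ultimately have "z = 5 * k - 2 \<or> 7 * k - 2 \<le> z"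
      using residue_class_gap[of z 1 "2 * k"] residue_class_gap[of z 2 "2 * k"] assms(1) by linarith
    moreover have "4 * k - 1 \<le> 5 * k - 2"
      using assms(1) by linarith
    ultimately have "z \<in> P3 k"
      using \<open>z mod (2 * k) = k - 2\<close> unfolding P3_def by auto
    moreover have "7 * k - 2 \<le> 7 * k - 1" "7 * k - 1 \<le> 8 * k - 3" "7 * k - 1 < x"
      using assms by linarith+
    ultimately show ?thesis
      unfolding z_def by (intro bexI[of _ "7 * k - 1"]) (auto simp: P4_def)
  qed
qed

lemma P4_dominating:
  assumes "2 \<le> k" "k \<le> x" "x \<notin> P4 k"
  shows "\<exists>y\<in>P4 k. y < x \<and> x - y \<in> P3 k"
  using P4_dominating_small[OF assms(1,2) _ assms(3)] P4_dominating_large[OF assms(1)]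
  by (cases "x \<le> 10 * k - 3") auto

lemma Pset_P3:
  assumes "2 \<le> k"
  shows "Pset (P3 k) = P4 k"
proof (rule Pset_eqI_least_move[of k])
  show "k \<in> P3 k" "P3 k \<subseteq> {k..}"
    using assms by (auto simp: P3_def)
  show "P4 k \<subseteq> {k..}"
    using assms by (auto simp: P4_def)
qed (use assms P4_independent P4_dominating in auto)

lemma Pset_P4:
  assumes "2 \<le> k"
  shows "Pset (P4 k) = Mk k"
proof (rule Pset_eq_Mk)
  show "0 < k" "{k..2 * k - 1} \<subseteq> P4 k"
    using assms by (auto simp: P4_def)
  show "P4 k \<subseteq> Mk k"
    using P4_eq[OF assms] by blast
qed

lemma P1_eq:
  assumes "0 < k"
  shows "P1 k = {x. x mod (2 * k) \<in> {k..2 * k - 1}}"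
proof -
  have "x mod (2 * k) \<le> 2 * k - 1" for x
    using mod_less_divisor[of "2 * k" x] assms by linarith
  then show ?thesis
    by (auto simp: P1_def)
qed

lemma P2_eq:
  assumes "0 < k"
  shows "P2 k = {k..2 * k - 1} \<union> {2 * j * k - 1 | j. j \<ge> 2}"
proof -
  have shift: "j * (2 * k) + (2 * k - 1) = 2 * (j + 1) * k - 1" for j
    using assms by (simp add: algebra_simps)
  have "{x. 4 * k - 1 \<le> x \<and> x mod (2 * k) = 2 * k - 1} = {j * (2 * k) + (2 * k - 1) | j. 1 \<le> j}"
    using assms by (intro residue_class_from) linarith+
  also have "\<dots> = {2 * j * k - 1 | j. j \<ge> 2}"
  proof (intro set_eqI iffI)
    fix x
    assume "x \<in> {j * (2 * k) + (2 * k - 1) | j. 1 \<le> j}"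
    then obtain j where "x = 2 * (j + 1) * k - 1" "1 \<le> j"
      unfolding shift by blast
    then show "x \<in> {2 * j * k - 1 | j. j \<ge> 2}"
      by (intro CollectI exI[of _ "j + 1"]) simp
  next
    fix x
    assume "x \<in> {2 * j * k - 1 | j. j \<ge> 2}"
    then obtain j where "x = 2 * j * k - 1" "2 \<le> j"
      by blast
    then have "x = 2 * ((j - 1) + 1) * k - 1" "1 \<le> j - 1"
      by simp_all
    then show "x \<in> {j * (2 * k) + (2 * k - 1) | j. 1 \<le> j}"
      unfolding shift by blast
  qed
  finally show ?thesis
    by (simp add: P2_def)
qed

lemma P3_eq:
  assumes "2 \<le> k"
  shows "P3 k = {k..2 * k - 1} \<union> {4 * k - 1..5 * k - 2} \<union> {(2 * j + 1) * k - 2 | j. j \<ge> 3}"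
proof -
  have shift: "j * (2 * k) + (k - 2) = (2 * j + 1) * k - 2" for j
    using assms by (simp add: algebra_simps)
  have "{x. 7 * k - 2 \<le> x \<and> x mod (2 * k) = k - 2} = {j * (2 * k) + (k - 2) | j. 3 \<le> j}"
    using assms by (intro residue_class_from) linarith+
  also have "\<dots> = {(2 * j + 1) * k - 2 | j. j \<ge> 3}"
    unfolding shift ..
  finally show ?thesis
    by (simp add: P3_def)
qed

theorem lemma9:
  fixes k :: nat
  assumes "k \<ge> 2"
  shows "iterP {k} 1 = {x. x mod (2 * k) \<in> {k..2 * k - 1}} \<and>
    iterP {k} 2 = {k..2 * k - 1} \<union> {2 * j * k - 1 | j. j \<ge> 2} \<and>
    iterP {k} 3 = {k..2 * k - 1} \<union> {4 * k - 1..5 * k - 2} \<union> {(2 * j + 1) * k - 2 | j. j \<ge> 3} \<and>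
    iterP {k} 4 = Mk k \<inter> {0..10 * k - 3} \<and>
    iterP {k} 5 = Mk k"
proof -
  have "0 < k"
    using assms by simp
  have "iterP {k} 1 = P1 k" "iterP {k} 2 = P2 k" "iterP {k} 3 = P3 k" "iterP {k} 4 = P4 k"
    "iterP {k} 5 = Mk k"
    using Pset_singleton[OF \<open>0 < k\<close>] Pset_P1[OF \<open>0 < k\<close>] Pset_P2[OF assms] Pset_P3[OF assms]
      Pset_P4[OF assms]
    by (simp_all add: iterP_def numeral_eq_Suc)
  then show ?thesis
    using P1_eq[OF \<open>0 < k\<close>] P2_eq[OF \<open>0 < k\<close>] P3_eq[OF assms] P4_eq[OF assms] by simp
qed

end
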